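(* Let $0<p<1$, let $\mathcal{X}=\{\frac1n,\frac2n,\ldots,\frac nn\}$, and let $\mathcal{H}_{EP;p}$ be the equal-piece classifier class described in the context. For any $\alpha,\epsilon\in(0,1)$ with $\epsilon<24/p$ and $\frac{2}{|\mathcal{X}|}<\alpha<\frac{p^2\epsilon}{24}$, the class $\mathcal{H}_{EP;p}$ is $(\alpha,\epsilon)$-separable.
   Context: Each hypothesis $h\in\mathcal{H}_{EP;p}$ is determined by parameters $a^h_1,\ldots,a^h_k$ with $a^h_1+p<a^h_2,\ \ldots,\ a^h_{k-1}+p<a^h_k,\ a^h_k+p<1$, defining intervals $[a^h_1,a^h_1+p],\ldots,[a^h_k,a^h_k+p]$; for $x\in\mathcal{X}$, $h(x)=1$ iff $x\in[a^h_i,a^h_i+p]$ for some $1\le i\le k$. For a class $\mathcal{H}$ over finite domain $\mathcal{X}$, the hypotheses graph is bipartite with parts $\mathcal{H}$ and $\mathcal{X}$, $h$ adjacent to $x$ iff $h(x)=1$. For $S\subseteq\mathcal{X}$, $T\subseteq\mathcal{H}$, $d(S,T)=\frac{e(S,T)}{|S||T|}$ with $e(S,T)$ the number of edges between $S$ and $T$. Hypotheses $h_1,h_2$ are $\epsilon$-close if $|\{x\in\mathcal{X}: h_1(x)\ne h_2(x)\}|\le\epsilon|\mathcal{X}|$; $B_h(\epsilon)$ is the set of hypotheses $\epsilon$-close to $h$. $T\subseteq\mathcal{H}$ is $(\alpha,\epsilon)$-tight if some $h$ has $|T\cap B_h(\epsilon)|\ge\alpha|T|$. $\mathcal{H}$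 is $(\alpha,\epsilon)$-separable if for every $T\subseteq\mathcal{H}$ that is not $(\alpha,\epsilon)$-tight there exist $S\subseteq\mathcal{X}$ and disjoint $T_0,T_1\subseteq T$ with $|S|\ge\alpha|\mathcal{X}|$, $|T_0|,|T_1|\ge\alpha|T|$ and $|d(S,T_0)-d(S,T_1)|\ge\alpha$. *)

theory Defs
  imports Complex_Main
begin

text \<open>Generic notions. A hypothesis over a finite domain X is identified with
  the set of points of X it labels 1; a class is a set of such sets.\<close>

definition edges :: "'a set \<Rightarrow> 'a set set \<Rightarrow> nat" where
  "edges S T = card {(x, h). x \<in> S \<and> h \<in> T \<and> x \<in> h}"

definition density :: "'a set \<Rightarrow> 'a set set \<Rightarrow> real" where
  "density S T = real (edges S T) / (real (card S) * real (card T))"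

definition eps_close :: "'a set \<Rightarrow> real \<Rightarrow> 'a set \<Rightarrow> 'a set \<Rightarrow> bool" where
  "eps_close X eps h1 h2 \<longleftrightarrow>
     real (card {x \<in> X. (x \<in> h1) \<noteq> (x \<in> h2)}) \<le> eps * real (card X)"

definition hball :: "'a set \<Rightarrow> 'a set set \<Rightarrow> 'a set \<Rightarrow> real \<Rightarrow> 'a set set" where
  "hball X H h eps = {h' \<in> H. eps_close X eps h h'}"

definition tight :: "'a set \<Rightarrow> 'a set set \<Rightarrow> 'a set set \<Rightarrow> real \<Rightarrow> real \<Rightarrow> bool" where
  "tight X H T alpha eps \<longleftrightarrow>
     (\<exists>h \<in> H. real (card (T \<inter> hball X H h eps)) \<ge> alpha * real (card T))"

definition separable :: "'a set \<Rightarrow> 'a set set \<Rightarrow> real \<Rightarrow> real \<Rightarrow> bool" where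
  "separable X H alpha eps \<longleftrightarrow>
     (\<forall>T \<subseteq> H. \<not> tight X H T alpha eps \<longrightarrow>
        (\<exists>S T0 T1. S \<subseteq> X \<and> T0 \<subseteq> T \<and> T1 \<subseteq> T \<and> T0 \<inter> T1 = {} \<and>
           real (card S) \<ge> alpha * real (card X) \<and>
           real (card T0) \<ge> alpha * real (card T) \<and>
           real (card T1) \<ge> alpha * real (card T) \<and>
           \<bar>density S T0 - density S T1\<bar> \<ge> alpha))"

definition grid :: "nat \<Rightarrow> real set" where
  "grid n = {real i / real n | i. i \<in> {1..n}}"

definition ep_params :: "real \<Rightarrow> nat \<Rightarrow> (nat \<Rightarrow> real) \<Rightarrow> bool" where
  "ep_params p k a \<longleftrightarrow> k \<ge> 1 \<and>
     (\<forall>i. Suc i < k \<longrightarrow> a i + p < a (Suc i)) \<and> a (k - 1) + p < 1"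

definition ep_hyp :: "real set \<Rightarrow> real \<Rightarrow> nat \<Rightarrow> (nat \<Rightarrow> real) \<Rightarrow> real set" where
  "ep_hyp X p k a = {x \<in> X. \<exists>i<k. a i \<le> x \<and> x \<le> a i + p}"

definition H_EP :: "real set \<Rightarrow> real \<Rightarrow> real set set" where
  "H_EP X p = {ep_hyp X p k a | k a. ep_params p k a}"

end

theory Submission
  imports Defs
begin

(* If T is not tight, every member of T disagrees with at least (1 - alpha)|T| members of T
   on more than eps|X| points, so the total disagreement, which equals
   2 * sum_x c(x) d(x) with c(x) and d(x) the numbers of members of T containing resp. missing x,
   is at least (1 - alpha) eps |X| |T|^2.
   Cut the grid into consecutive blocks of about alpha|X| points. A union of intervals of
   length p spaced more than p apart in [0, 1] changes its label along the grid at most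
   2/p + 2 times, so each hypothesis splits only few blocks. If on every block fewer than
   alpha|T| hypotheses contained the whole block or fewer than alpha|T| missed it entirely,
   then c(x) d(x) would be small on every block and the disagreement too small. Hence some
   block W is contained in alpha|T| hypotheses and disjoint from alpha|T| others: on W these
   two families have densities 1 and 0. *)

lemma sum_pair_disagreements:
  assumes "finite X" "finite T"
  shows "(\<Sum>h\<in>T. \<Sum>h'\<in>T. real (card {x\<in>X. (x \<in> h) \<noteq> (x \<in> h')}))
       = (\<Sum>x\<in>X. 2 * real (card {h\<in>T. x \<in> h}) * real (card {h\<in>T. x \<notin> h}))"
proof -
  have card_as_sum: "real (card {x\<in>X. P x}) = (\<Sum>x\<in>X. if P x then 1 else 0)" for P
    using assms(1) by (simp add: sum.inter_filter[symmetric])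
  have inner: "(\<Sum>h\<in>T. \<Sum>h'\<in>T. if (x \<in> h) \<noteq> (x \<in> h') then 1 else 0 :: real)
      = 2 * real (card {h\<in>T. x \<in> h}) * real (card {h\<in>T. x \<notin> h})" for x
  proof -
    have "(\<Sum>h\<in>T. \<Sum>h'\<in>T. if (x \<in> h) \<noteq> (x \<in> h') then 1 else 0 :: real)
        = (\<Sum>h\<in>T. if x \<in> h then real (card {h\<in>T. x \<notin> h}) else real (card {h\<in>T. x \<in> h}))"
      using assms(2) by (intro sum.cong) (auto simp: sum.If_cases Int_def)
    also have "\<dots> = 2 * real (card {h\<in>T. x \<in> h}) * real (card {h\<in>T. x \<notin> h})"
      using assms(2) by (simp add: sum.If_cases Int_def Diff_eq[symmetric] set_diff_eq)
    finally show ?thesis .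
  qed
  have "(\<Sum>h\<in>T. \<Sum>h'\<in>T. real (card {x\<in>X. (x \<in> h) \<noteq> (x \<in> h')}))
      = (\<Sum>h\<in>T. \<Sum>h'\<in>T. \<Sum>x\<in>X. if (x \<in> h) \<noteq> (x \<in> h') then 1 else 0)"
    by (simp only: card_as_sum)
  also have "\<dots> = (\<Sum>h\<in>T. \<Sum>x\<in>X. \<Sum>h'\<in>T. if (x \<in> h) \<noteq> (x \<in> h') then 1 else 0)"
    by (intro sum.cong refl sum.swap)
  also have "\<dots> = (\<Sum>x\<in>X. \<Sum>h\<in>T. \<Sum>h'\<in>T. if (x \<in> h) \<noteq> (x \<in> h') then 1 else 0)"
    by (rule sum.swap)
  also have "\<dots> = (\<Sum>x\<in>X. 2 * real (card {h\<in>T. x \<in> h}) * real (card {h\<in>T. x \<notin> h}))"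
    by (simp only: inner)
  finally show ?thesis .
qed

lemma sum_pair_disagreements_ge:
  assumes "finite T" "0 \<le> eps"
    and far: "\<And>h. h \<in> T \<Longrightarrow> real (card {h'\<in>T. eps_close X eps h h'}) < alpha * real (card T)"
  shows "(1 - alpha) * eps * real (card X) * real (card T) ^ 2
       \<le> (\<Sum>h\<in>T. \<Sum>h'\<in>T. real (card {x\<in>X. (x \<in> h) \<noteq> (x \<in> h')}))"
proof -
  let ?N = "real (card T)"
  have row: "(1 - alpha) * ?N * (eps * real (card X))
      \<le> (\<Sum>h'\<in>T. real (card {x\<in>X. (x \<in> h) \<noteq> (x \<in> h')}))" if "h \<in> T" for h
  proof -
    define F where "F = {h'\<in>T. \<not> eps_close X eps h h'}"
    have "T - F = {h'\<in>T. eps_close X eps h h'}" unfolding F_def by auto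
    then have "(1 - alpha) * ?N \<le> real (card F)"
      using far[OF that] card_Diff_subset[of F T] card_mono[of T F] assms(1)
      by (auto simp: F_def of_nat_diff algebra_simps)
    then have "(1 - alpha) * ?N * (eps * real (card X)) \<le> real (card F) * (eps * real (card X))"
      using assms(2) by (intro mult_right_mono) auto
    also have "\<dots> \<le> (\<Sum>h'\<in>F. real (card {x\<in>X. (x \<in> h) \<noteq> (x \<in> h')}))"
      by (rule sum_bounded_below) (auto simp: F_def eps_close_def)
    also have "\<dots> \<le> (\<Sum>h'\<in>T. real (card {x\<in>X. (x \<in> h) \<noteq> (x \<in> h')}))"
      using assms(1) by (intro sum_mono2) (auto simp: F_def)
    finally show ?thesis .
  qed
  have "(1 - alpha) * eps * real (card X) * ?N ^ 2 = ?N * ((1 - alpha) * ?N * (eps * real (card X)))"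
    by (simp add: power2_eq_square algebra_simps)
  also have "\<dots> \<le> (\<Sum>h\<in>T. \<Sum>h'\<in>T. real (card {x\<in>X. (x \<in> h) \<noteq> (x \<in> h')}))"
    using sum_bounded_below[of T, OF row] by simp
  finally show ?thesis .
qed

definition label_changes :: "(nat \<Rightarrow> 'a) \<Rightarrow> nat \<Rightarrow> 'a set \<Rightarrow> nat set" where
  "label_changes f n h = {i. Suc i < n \<and> (f i \<in> h) \<noteq> (f (Suc i) \<in> h)}"

definition block :: "(nat \<Rightarrow> 'a) \<Rightarrow> nat \<Rightarrow> nat \<Rightarrow> 'a set" where
  "block f w j = f ` {j * w..<j * w + w}"

lemma exists_change_between:
  assumes "a \<le> b" "P a \<noteq> P b"
  shows "\<exists>i. a \<le> i \<and> i < b \<and> P i \<noteq> P (Suc i)"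
  using assms
proof (induction b rule: dec_induct)
  case (step b)
  then show ?case
    by (cases "P a = P b") (auto intro: le_SucI less_SucI)
qed simp

lemma card_straddled_blocks_le:
  assumes "m * w \<le> n"
  shows "card {j. j < m \<and> \<not> block f w j \<subseteq> h \<and> block f w j \<inter> h \<noteq> {}}
       \<le> card (label_changes f n h)"
proof -
  have "{j. j < m \<and> \<not> block f w j \<subseteq> h \<and> block f w j \<inter> h \<noteq> {}}
      \<subseteq> (\<lambda>i. i div w) ` label_changes f n h"
  proof
    fix j assume "j \<in> {j. j < m \<and> \<not> block f w j \<subseteq> h \<and> block f w j \<inter> h \<noteq> {}}"
    then obtain i1 i2 where j: "j < m" and i1: "i1 \<in> {j * w..<j * w + w}" "f i1 \<notin> h"
      and i2: "i2 \<in> {j * w..<j * w + w}" "f i2 \<in> h"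
      by (auto simp: block_def) blast
    have "(f (min i1 i2) \<in> h) \<noteq> (f (max i1 i2) \<in> h)"
      using i1 i2 by (cases "i1 \<le> i2") (auto simp: min_def max_def)
    then obtain i where i: "min i1 i2 \<le> i" "i < max i1 i2" "(f i \<in> h) \<noteq> (f (Suc i) \<in> h)"
      using exists_change_between[of "min i1 i2" "max i1 i2" "\<lambda>i. f i \<in> h"] by fastforce
    have "j * w + w \<le> m * w"
      using j by (metis add.commute mult_Suc less_eq_Suc_le mult_le_mono1)
    then have "i \<in> label_changes f n h"
      using i i1 i2 assms by (auto simp: label_changes_def)
    moreover have "i div w = j"
      using i i1 i2 by (intro div_nat_eqI) (auto simp: algebra_simps)
    ultimately show "j \<in> (\<lambda>i. i div w) ` label_changes f n h" by force
  qed
  moreover have "finite (label_changes f n h)"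
    by (rule finite_subset[of _ "{..<n}"]) (auto simp: label_changes_def)
  ultimately show ?thesis
    by (meson card_image_le card_mono finite_imageI order_trans)
qed

lemma sum_card_straddled_le:
  assumes "finite T" "m * w \<le> n"
    and changes: "\<And>h. h \<in> T \<Longrightarrow> real (card (label_changes f n h)) \<le> K"
  shows "(\<Sum>j<m. real (card {h\<in>T. \<not> block f w j \<subseteq> h \<and> block f w j \<inter> h \<noteq> {}}))
       \<le> real (card T) * K"
proof -
  let ?S = "\<lambda>j h. \<not> block f w j \<subseteq> h \<and> block f w j \<inter> h \<noteq> {}"
  have "(\<Sum>j<m. real (card {h\<in>T. ?S j h})) = (\<Sum>j<m. \<Sum>h\<in>T. if ?S j h then 1 else 0)"
    using assms(1) by (simp add: sum.inter_filter[symmetric])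
  also have "\<dots> = (\<Sum>h\<in>T. \<Sum>j<m. if ?S j h then 1 else 0)"
    by (rule sum.swap)
  also have "\<dots> = (\<Sum>h\<in>T. real (card {j. j < m \<and> ?S j h}))"
    by (intro sum.cong refl)
      (simp add: sum.inter_filter[symmetric] Collect_conj_eq lessThan_def Int_commute)
  also have "\<dots> \<le> (\<Sum>h\<in>T. K)"
    by (intro sum_mono order_trans[OF _ changes])
      (use card_straddled_blocks_le[OF assms(2)] in auto)
  finally show ?thesis by simp
qed

lemma sum_blocks_le:
  fixes g b :: "nat \<Rightarrow> real"
  assumes "0 < w"
    and rest: "\<And>i. i < n \<Longrightarrow> g i \<le> M"
    and blocks: "\<And>j i. j < n div w \<Longrightarrow> i \<in> {j * w..<j * w + w} \<Longrightarrow> g i \<le> b j"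
  shows "(\<Sum>i<n. g i) \<le> real w * (\<Sum>j<n div w. b j) + real (n mod w) * M"
proof -
  let ?m = "n div w"
  have split: "{..<n} = {..<?m * w} \<union> {?m * w..<n}"
    using div_times_less_eq_dividend[of n w] by (auto intro: less_le_trans)
  have "(\<Sum>i<n. g i) = (\<Sum>i<?m * w. g i) + (\<Sum>i\<in>{?m * w..<n}. g i)"
    unfolding split by (rule sum.union_disjoint) auto
  also have "(\<Sum>i<?m * w. g i) = (\<Sum>j<?m. \<Sum>i\<in>{j * w..<j * w + w}. g i)"
    by (rule sum.nat_group[symmetric])
  also have "\<dots> \<le> (\<Sum>j<?m. real w * b j)"
  proof (rule sum_mono)
    fix j assume "j \<in> {..<?m}"
    then show "(\<Sum>i\<in>{j * w..<j * w + w}. g i) \<le> real w * b j"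
      using sum_bounded_above[of "{j * w..<j * w + w}" g "b j"] blocks by simp
  qed
  also have "(\<Sum>i\<in>{?m * w..<n}. g i) \<le> real (n mod w) * M"
    using sum_bounded_above[of "{?m * w..<n}" g M] rest by (simp add: minus_div_mult_eq_mod)
  finally show ?thesis by (simp add: sum_distrib_left)
qed

lemma agreement_disagreement_le:
  assumes "finite T" "x \<in> W"
  shows "real (card {h\<in>T. x \<in> h}) * real (card {h\<in>T. x \<notin> h})
       \<le> real (card T) * (min (real (card {h\<in>T. W \<subseteq> h})) (real (card {h\<in>T. W \<inter> h = {}}))
                           + real (card {h\<in>T. \<not> W \<subseteq> h \<and> W \<inter> h \<noteq> {}}))"
proof -
  let ?c = "real (card {h\<in>T. x \<in> h})" and ?d = "real (card {h\<in>T. x \<notin> h})"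
  let ?A = "real (card {h\<in>T. W \<subseteq> h})" and ?B = "real (card {h\<in>T. W \<inter> h = {}})"
    and ?C = "real (card {h\<in>T. \<not> W \<subseteq> h \<and> W \<inter> h \<noteq> {}})"
  have "card {h\<in>T. x \<in> h} \<le> card ({h\<in>T. W \<subseteq> h} \<union> {h\<in>T. \<not> W \<subseteq> h \<and> W \<inter> h \<noteq> {}})"
    using assms by (intro card_mono) auto
  then have c: "?c \<le> ?A + ?C"
    using card_Un_le[of "{h\<in>T. W \<subseteq> h}"] by (smt (verit) of_nat_add of_nat_le_iff)
  have "card {h\<in>T. x \<notin> h} \<le> card ({h\<in>T. W \<inter> h = {}} \<union> {h\<in>T. \<not> W \<subseteq> h \<and> W \<inter> h \<noteq> {}})"
    using assms by (intro card_mono) auto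
  then have d: "?d \<le> ?B + ?C"
    using card_Un_le[of "{h\<in>T. W \<inter> h = {}}"] by (smt (verit) of_nat_add of_nat_le_iff)
  have cN: "?c \<le> real (card T)" and dN: "?d \<le> real (card T)"
    using assms(1) by (simp_all add: card_mono)
  have "?c * ?d \<le> (?A + ?C) * real (card T)"
    using c dN by (intro mult_mono) auto
  moreover have "?c * ?d \<le> real (card T) * (?B + ?C)"
    using cN d by (intro mult_mono) auto
  ultimately show ?thesis by (simp add: min_def mult.commute)
qed

lemma density_covered:
  assumes "finite W" "W \<noteq> {}" "finite A" "A \<noteq> {}" "\<And>h. h \<in> A \<Longrightarrow> W \<subseteq> h"
  shows "density W A = 1"
proof -
  have "{(x, h). x \<in> W \<and> h \<in> A \<and> x \<in> h} = W \<times> A" using assms(5) by auto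
  then show ?thesis
    using assms(1-4) by (simp add: density_def edges_def card_cartesian_product)
qed

lemma density_avoided:
  assumes "\<And>h. h \<in> B \<Longrightarrow> W \<inter> h = {}"
  shows "density W B = 0"
proof -
  have "{(x, h). x \<in> W \<and> h \<in> B \<and> x \<in> h} = {}" using assms by auto
  then have "edges W B = 0" unfolding edges_def by (simp only: card.empty)
  then show ?thesis by (simp add: density_def)
qed

lemma unbalanced_blocks_bound:
  assumes X: "X = f ` {..<n}" "inj_on f {..<n}"
    and T: "finite T" "T \<noteq> {}"
    and "0 \<le> alpha" "0 \<le> eps" "0 < w"
    and changes: "\<And>h. h \<in> T \<Longrightarrow> real (card (label_changes f n h)) \<le> K"
    and far: "\<And>h. h \<in> T \<Longrightarrow> real (card {h'\<in>T. eps_close X eps h h'}) < alpha * real (card T)"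
    and unbalanced: "\<And>j. j < n div w \<Longrightarrow>
          min (real (card {h\<in>T. block f w j \<subseteq> h})) (real (card {h\<in>T. block f w j \<inter> h = {}}))
            < alpha * real (card T)"
  shows "(1 - alpha) * eps * real n \<le> 2 * (alpha * real n + real w * K + real (n mod w))"
proof -
  let ?N = "real (card T)" and ?m = "n div w"
  let ?C = "\<lambda>j. real (card {h\<in>T. \<not> block f w j \<subseteq> h \<and> block f w j \<inter> h \<noteq> {}})"
  define g where "g i = real (card {h\<in>T. f i \<in> h}) * real (card {h\<in>T. f i \<notin> h})" for i
  have N: "0 < ?N" using T by (simp add: card_gt_0_iff)
  have cardX: "card X = n" using X by (simp add: card_image)
  have mw: "?m * w \<le> n" by simp
  have "g i \<le> ?N * ?N" for i
    unfolding g_def using T(1) by (intro mult_mono) (simp_all add: card_mono)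
  moreover have "g i \<le> ?N * (alpha * ?N + ?C j)" if "j < ?m" "i \<in> {j * w..<j * w + w}" for i j
  proof -
    have "f i \<in> block f w j" using that(2) by (simp add: block_def)
    from agreement_disagreement_le[OF T(1) this] unbalanced[OF that(1)]
    show ?thesis unfolding g_def by (smt (verit) N mult_left_mono)
  qed
  ultimately have "(\<Sum>i<n. g i) \<le> real w * (\<Sum>j<?m. ?N * (alpha * ?N + ?C j)) + real (n mod w) * (?N * ?N)"
    by (intro sum_blocks_le[OF \<open>0 < w\<close>])
  also have "(\<Sum>j<?m. ?N * (alpha * ?N + ?C j)) = ?N * (real ?m * alpha * ?N + (\<Sum>j<?m. ?C j))"
    by (simp add: distrib_left sum.distrib flip: sum_distrib_left)
  also have "real w * \<dots> \<le> real w * (?N * (real ?m * alpha * ?N + ?N * K))"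
    using sum_card_straddled_le[OF T(1) mw changes] N by (intro mult_left_mono) simp_all
  finally have upper: "(\<Sum>i<n. g i) \<le> ?N ^ 2 * (real (?m * w) * alpha + real w * K + real (n mod w))"
    by (simp add: power2_eq_square algebra_simps)
  have "(1 - alpha) * eps * real n * ?N ^ 2
      \<le> (\<Sum>h\<in>T. \<Sum>h'\<in>T. real (card {x\<in>X. (x \<in> h) \<noteq> (x \<in> h')}))"
    using sum_pair_disagreements_ge[OF T(1) \<open>0 \<le> eps\<close> far] by (simp add: cardX)
  also have "\<dots> = 2 * (\<Sum>i<n. g i)"
    using sum_pair_disagreements[of X T] T(1) X
    by (simp add: sum.reindex g_def sum_distrib_left mult.assoc)
  also have "\<dots> \<le> ?N ^ 2 * (2 * (real (?m * w) * alpha + real w * K + real (n mod w)))"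
    using upper by (simp only: mult.left_commute[of "?N ^ 2" 2])
  finally have "(1 - alpha) * eps * real n \<le> 2 * (real (?m * w) * alpha + real w * K + real (n mod w))"
    using N by (simp add: mult.commute[of _ "?N ^ 2"])
  moreover have "real (?m * w) * alpha \<le> alpha * real n"
    using mult_right_mono[OF of_nat_mono[OF mw] \<open>0 \<le> alpha\<close>] by (simp add: mult.commute)
  ultimately show ?thesis by argo
qed

lemma block_separates:
  assumes X: "X = f ` {..<n}" "inj_on f {..<n}"
    and "j < n div w" "alpha * real n \<le> real w" "0 < alpha" "alpha \<le> 1" "finite T" "T \<noteq> {}"
    and A: "alpha * real (card T) \<le> real (card {h\<in>T. block f w j \<subseteq> h})"
    and B: "alpha * real (card T) \<le> real (card {h\<in>T. block f w j \<inter> h = {}})"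
  shows "\<exists>S T0 T1. S \<subseteq> X \<and> T0 \<subseteq> T \<and> T1 \<subseteq> T \<and> T0 \<inter> T1 = {} \<and>
           real (card S) \<ge> alpha * real (card X) \<and>
           real (card T0) \<ge> alpha * real (card T) \<and>
           real (card T1) \<ge> alpha * real (card T) \<and>
           \<bar>density S T0 - density S T1\<bar> \<ge> alpha"
proof -
  let ?W = "block f w j" and ?A = "{h\<in>T. block f w j \<subseteq> h}" and ?B = "{h\<in>T. block f w j \<inter> h = {}}"
  have "j * w + w \<le> n div w * w"
    using assms(3) by (metis add.commute mult_Suc less_eq_Suc_le mult_le_mono1)
  then have "j * w + w \<le> n"
    using div_times_less_eq_dividend[of n w] by linarith
  then have range: "{j * w..<j * w + w} \<subseteq> {..<n}" by auto
  then have W: "?W \<subseteq> X" "card ?W = w"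
    using X by (auto simp: block_def card_image inj_on_subset)
  have "0 < w" using assms(3) by (cases w) auto
  then have "?W \<noteq> {}" using W(2) by auto
  have "0 < alpha * real (card T)"
    using \<open>0 < alpha\<close> \<open>finite T\<close> \<open>T \<noteq> {}\<close> by (simp add: card_gt_0_iff)
  then have "?A \<noteq> {}" using A by (metis card.empty not_le of_nat_0)
  have "density ?W ?A = 1"
    using \<open>?W \<noteq> {}\<close> \<open>?A \<noteq> {}\<close> \<open>finite T\<close> by (intro density_covered) (auto simp: block_def)
  moreover have "density ?W ?B = 0" by (rule density_avoided) simp
  moreover have "alpha * real (card X) \<le> real (card ?W)"
    using W(2) X assms(4) by (simp add: card_image)
  moreover have "?A \<inter> ?B = {}" using \<open>?W \<noteq> {}\<close> by auto
  ultimately show ?thesis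
    using W(1) A B assms(6) by (intro exI[of _ ?W] exI[of _ ?A] exI[of _ ?B]) auto
qed

lemma card_close_lt_if_not_tight:
  assumes "T \<subseteq> H" "\<not> tight X H T alpha eps" "h \<in> T"
  shows "real (card {h'\<in>T. eps_close X eps h h'}) < alpha * real (card T)"
proof -
  have "T \<inter> hball X H h eps = {h'\<in>T. eps_close X eps h h'}"
    using assms(1) by (auto simp: hball_def)
  then show ?thesis using assms by (force simp: tight_def)
qed

lemma exists_balanced_block:
  assumes X: "X = f ` {..<n}" "inj_on f {..<n}"
    and T: "finite T" "T \<noteq> {}"
    and changes: "\<And>h. h \<in> T \<Longrightarrow> real (card (label_changes f n h)) \<le> K"
    and far: "\<And>h. h \<in> T \<Longrightarrow> real (card {h'\<in>T. eps_close X eps h h'}) < alpha * real (card T)"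
    and "0 \<le> K" "0 \<le> eps" "0 < alpha" "2 \<le> alpha * real n"
    and margin: "alpha * (4 + 3 * K) < (1 - alpha) * eps"
    and w: "alpha * real n \<le> real w" "real w < alpha * real n + 1"
  shows "\<exists>j < n div w. alpha * real (card T) \<le> real (card {h\<in>T. block f w j \<subseteq> h})
           \<and> alpha * real (card T) \<le> real (card {h\<in>T. block f w j \<inter> h = {}})"
proof (rule ccontr)
  assume "\<not> ?thesis"
  moreover have "0 < w" using w(1) \<open>2 \<le> alpha * real n\<close> by linarith
  ultimately have "(1 - alpha) * eps * real n \<le> 2 * (alpha * real n + real w * K + real (n mod w))"
    using T \<open>0 < alpha\<close> \<open>0 \<le> eps\<close> changes far
    by (intro unbalanced_blocks_bound[OF X]) (auto simp: min_less_iff_disj not_le)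
  moreover have "real (n mod w) \<le> alpha * real n"
    using mod_less_divisor[OF \<open>0 < w\<close>, of n] w(2) by linarith
  moreover have "real w * K \<le> 3 / 2 * alpha * real n * K"
    using w(2) \<open>2 \<le> alpha * real n\<close> \<open>0 \<le> K\<close> by (intro mult_right_mono) linarith+
  ultimately have "(1 - alpha) * eps * real n \<le> alpha * (4 + 3 * K) * real n"
    by (simp add: algebra_simps)
  moreover have "0 < real n"
    using \<open>0 < alpha\<close> \<open>2 \<le> alpha * real n\<close> by (smt (verit) mult_nonneg_nonpos of_nat_0_le_iff)
  ultimately show False using margin by (simp add: mult_le_cancel_right)
qed

theorem separable_if_few_label_changes:
  fixes f :: "nat \<Rightarrow> 'a" and H :: "'a set set"
  assumes X: "X = f ` {..<n}" "inj_on f {..<n}"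
    and H: "H \<subseteq> Pow X" "H \<noteq> {}"
    and changes: "\<And>h. h \<in> H \<Longrightarrow> real (card (label_changes f n h)) \<le> K"
    and alpha: "0 < alpha" "alpha \<le> 1" "2 \<le> alpha * real n"
    and margin: "alpha * (4 + 3 * K) < (1 - alpha) * eps"
  shows "separable X H alpha eps"
  unfolding separable_def
proof (intro allI impI)
  fix T assume "T \<subseteq> H" and not_tight: "\<not> tight X H T alpha eps"
  have "finite T"
    using \<open>T \<subseteq> H\<close> H(1) X by (meson finite_Pow_iff finite_imageI finite_lessThan finite_subset)
  have "T \<noteq> {}" using not_tight H(2) by (auto simp: tight_def)
  have "0 \<le> K" using changes H(2) by (meson all_not_in_conv of_nat_0_le_iff order_trans)
  then have "0 < (1 - alpha) * eps" using margin alpha(1) by (smt (verit) mult_pos_pos)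
  then have "0 \<le> eps" using alpha(2) by (simp add: zero_less_mult_iff)
  define w where "w = nat \<lceil>alpha * real n\<rceil>"
  have w: "alpha * real n \<le> real w" "real w < alpha * real n + 1"
    using alpha(3) by (simp_all add: w_def) linarith+
  obtain j where "j < n div w"
    and "alpha * real (card T) \<le> real (card {h\<in>T. block f w j \<subseteq> h})"
    and "alpha * real (card T) \<le> real (card {h\<in>T. block f w j \<inter> h = {}})"
    using exists_balanced_block[OF X \<open>finite T\<close> \<open>T \<noteq> {}\<close> _ _ \<open>0 \<le> K\<close> \<open>0 \<le> eps\<close> alpha(1,3) margin w]
      changes card_close_lt_if_not_tight[OF \<open>T \<subseteq> H\<close> not_tight] \<open>T \<subseteq> H\<close>
    by blast
  from block_separates[OF X this(1) w(1) alpha(1,2) \<open>finite T\<close> \<open>T \<noteq> {}\<close> this(2,3)]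
  show "\<exists>S T0 T1. S \<subseteq> X \<and> T0 \<subseteq> T \<and> T1 \<subseteq> T \<and> T0 \<inter> T1 = {} \<and>
           real (card S) \<ge> alpha * real (card X) \<and>
           real (card T0) \<ge> alpha * real (card T) \<and>
           real (card T1) \<ge> alpha * real (card T) \<and>
           \<bar>density S T0 - density S T1\<bar> \<ge> alpha" .
qed

lemma card_label_changes_intervals_le:
  fixes f :: "nat \<Rightarrow> 'a::linorder" and lo hi :: "nat \<Rightarrow> 'a"
  assumes "strict_mono f"
  shows "card (label_changes f n (\<Union>j<k. {lo j..hi j}))
       \<le> 2 * card {j. j < k \<and> (\<exists>i<n. f i \<in> {lo j..hi j})}"
proof -
  let ?U = "\<Union>j<k. {lo j..hi j}" and ?J = "{j. j < k \<and> (\<exists>i<n. f i \<in> {lo j..hi j})}"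
  \<comment> \<open>A change at i is charged to an interval left (True) or entered (False) between
     f i and f (Suc i); by convexity of intervals no pair is charged twice.\<close>
  let ?r = "\<lambda>i jb. snd jb = (f i \<in> {lo (fst jb)..hi (fst jb)})
                   \<and> snd jb = (f (Suc i) \<notin> {lo (fst jb)..hi (fst jb)})"
  have between: "f y \<in> {lo j..hi j}"
    if "x \<le> y" "y \<le> z" "f x \<in> {lo j..hi j}" "f z \<in> {lo j..hi j}" for x y z j
    using that monoD[OF strict_mono_mono[OF assms]] by (meson atLeastAtMost_iff order_trans)
  have "card (label_changes f n ?U) \<le> card (?J \<times> (UNIV :: bool set))"
  proof (rule card_le_if_inj_on_rel[where r = ?r])
    show "finite (?J \<times> (UNIV :: bool set))" by simp
  next
    fix i assume "i \<in> label_changes f n ?U"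
    then have n: "i < n" "Suc i < n" and change: "(f i \<in> ?U) \<noteq> (f (Suc i) \<in> ?U)"
      by (auto simp: label_changes_def)
    show "\<exists>jb. jb \<in> ?J \<times> UNIV \<and> ?r i jb"
    proof (cases "f i \<in> ?U")
      case True
      then obtain j where "j < k" "f i \<in> {lo j..hi j}" by blast
      moreover have "f (Suc i) \<notin> {lo j..hi j}" using change True \<open>j < k\<close> by blast
      ultimately show ?thesis using n(1) by (intro exI[of _ "(j, True)"])
          (simp only: fst_conv snd_conv mem_Times_iff; blast)
    next
      case False
      then obtain j where "j < k" "f (Suc i) \<in> {lo j..hi j}" using change by blast
      moreover have "f i \<notin> {lo j..hi j}" using False \<open>j < k\<close> by blast
      ultimately show ?thesis using n(2) by (intro exI[of _ "(j, False)"])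
          (simp only: fst_conv snd_conv mem_Times_iff; blast)
    qed
  next
    fix i1 i2 jb
    assume r: "?r i1 jb" "?r i2 jb"
    have False if "x < y" "?r x jb" "?r y jb" for x y
    proof (cases "snd jb")
      case True
      then show False using that between[of x "Suc x" y "fst jb"] by auto
    next
      case False
      then show False using that between[of "Suc x" y "Suc y" "fst jb"] by auto
    qed
    then show "i1 = i2" using r by (meson linorder_neqE_nat)
  qed
  then show ?thesis by (simp add: card_cartesian_product)
qed

lemma label_changes_Int:
  assumes "f ` {..<n} \<subseteq> X"
  shows "label_changes f n (X \<inter> U) = label_changes f n U"
  using assms by (auto simp: label_changes_def dest: Suc_lessD)

definition grid_point :: "nat \<Rightarrow> nat \<Rightarrow> real" where
  "grid_point n i = real (Suc i) / real n"

lemma strict_mono_grid_point: "0 < n \<Longrightarrow> strict_mono (grid_point n)"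
  by (rule strict_monoI) (simp add: grid_point_def divide_strict_right_mono)

lemma grid_eq_image: "grid n = grid_point n ` {..<n}"
proof -
  have "grid n = (\<lambda>i. real i / real n) ` {1..n}" by (auto simp: grid_def)
  also have "{1..n} = Suc ` {..<n}" by (simp add: image_Suc_lessThan)
  finally show ?thesis by (simp add: image_image grid_point_def)
qed

lemma inj_on_grid_point: "0 < n \<Longrightarrow> inj_on (grid_point n) {..<n}"
  using strict_mono_grid_point strict_mono_imp_inj_on by blast

lemma card_grid: "0 < n \<Longrightarrow> card (grid n) = n"
  by (simp add: grid_eq_image card_image inj_on_grid_point)

lemma ep_params_spacing:
  assumes "ep_params p k a" "j \<le> j'" "j' < k"
  shows "a j + real (j' - j) * p \<le> a j'"
  using assms(2,3)
proof (induction j' rule: dec_induct)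
  case (step m)
  then have "a m + p < a (Suc m)" using assms(1) by (simp add: ep_params_def)
  with step show ?case by (simp add: of_nat_diff algebra_simps)
qed simp

lemma card_ep_intervals_le:
  assumes "ep_params p k a" "0 < p"
  shows "real (card {j. j < k \<and> 0 < a j + p}) \<le> 1 / p + 1"
proof (cases "{j. j < k \<and> 0 < a j + p} = {}")
  case True
  then show ?thesis using assms(2) by (simp only: card.empty) simp
next
  case False
  define j0 where "j0 = Min {j. j < k \<and> 0 < a j + p}"
  have j0: "j0 < k" "0 < a j0 + p"
    using Min_in[of "{j. j < k \<and> 0 < a j + p}"] False by (auto simp: j0_def)
  have "{j. j < k \<and> 0 < a j + p} \<subseteq> {j0..<k}" by (auto simp: j0_def)
  then have "card {j. j < k \<and> 0 < a j + p} \<le> k - j0"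
    by (metis card_atLeastLessThan card_mono finite_atLeastLessThan)
  moreover have "a j0 + real (k - 1 - j0) * p \<le> a (k - 1)"
    using ep_params_spacing[OF assms(1), of j0 "k - 1"] j0 by simp
  then have "real (k - 1 - j0) * p < 1"
    using j0 assms(1) by (simp add: ep_params_def)
  then have "real (k - 1 - j0) < 1 / p" using assms(2) by (simp add: field_simps)
  ultimately show ?thesis using j0(1) by (simp add: of_nat_diff)
qed

lemma card_label_changes_ep_hyp_le:
  assumes "0 < n" "0 < p" "ep_params p k a"
  shows "real (card (label_changes (grid_point n) n (ep_hyp (grid n) p k a))) \<le> 2 / p + 2"
proof -
  have "ep_hyp (grid n) p k a = grid n \<inter> (\<Union>j<k. {a j..a j + p})"
    by (auto simp: ep_hyp_def)
  then have "card (label_changes (grid_point n) n (ep_hyp (grid n) p k a))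
      \<le> 2 * card {j. j < k \<and> (\<exists>i<n. grid_point n i \<in> {a j..a j + p})}"
    using card_label_changes_intervals_le[OF strict_mono_grid_point[OF assms(1)]]
    by (simp add: label_changes_Int grid_eq_image)
  also have "\<dots> \<le> 2 * card {j. j < k \<and> 0 < a j + p}"
  proof -
    have "0 < grid_point n i" for i using assms(1) by (simp add: grid_point_def)
    then show ?thesis by (intro mult_le_mono2 card_mono) (auto intro: less_le_trans)
  qed
  finally show ?thesis
    using card_ep_intervals_le[OF assms(3,2)] by linarith
qed

lemma ep_margin:
  fixes p alpha eps :: real
  assumes "0 < p" "p \<le> 1" "0 < alpha" "0 < eps" "eps \<le> 1" "alpha < p\<^sup>2 * eps / 24"
  shows "alpha * (4 + 3 * (2 / p + 2)) < (1 - alpha) * eps"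
proof -
  have "p\<^sup>2 * eps \<le> 1 * 1"
    using assms(1,2,4,5) by (intro mult_mono power_le_one) auto
  then have "alpha < 1 / 24" using assms(6) by linarith
  then have "alpha * eps < eps / 24"
    using mult_strict_right_mono[OF _ assms(4)] by fastforce
  have "alpha * (4 + 3 * (2 / p + 2)) = 10 * alpha + 6 * (alpha / p)"
    using assms(1) by (simp add: field_simps)
  also have "\<dots> \<le> 16 * (alpha / p)"
    using assms(1-3) by (simp add: field_simps)
  also have "\<dots> < 16 * (p * eps / 24)"
    using assms(1,6) by (simp add: field_simps power2_eq_square)
  also have "\<dots> \<le> 16 * (eps / 24)"
    using assms(2,4) by simp
  also have "\<dots> < (1 - alpha) * eps"
    using \<open>alpha * eps < eps / 24\<close> assms(4) unfolding left_diff_distrib by linarith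
  finally show ?thesis .
qed

theorem theorem7:
  fixes p alpha eps :: real and n :: nat
  assumes "0 < p" "p < 1" "n \<ge> 1"
    and "0 < alpha" "alpha < 1" "0 < eps" "eps < 1"
    and "eps < 24 / p"
    and "2 / real (card (grid n)) < alpha"
    and "alpha < p\<^sup>2 * eps / 24"
  shows "separable (grid n) (H_EP (grid n) p) alpha eps"
proof -
  have "0 < n" using assms(3) by simp
  have margin: "alpha * (4 + 3 * (2 / p + 2)) < (1 - alpha) * eps"
    using assms(1,2,4,6,7,10) by (intro ep_margin) auto
  show ?thesis
  proof (rule separable_if_few_label_changes[where K = "2 / p + 2",
        OF grid_eq_image inj_on_grid_point[OF \<open>0 < n\<close>]])
    show "H_EP (grid n) p \<subseteq> Pow (grid n)" by (auto simp: H_EP_def ep_hyp_def)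
    have "ep_params p 1 (\<lambda>_. 0)" using assms(2) by (simp add: ep_params_def)
    then show "H_EP (grid n) p \<noteq> {}" by (auto simp: H_EP_def)
    show "real (card (label_changes (grid_point n) n h)) \<le> 2 / p + 2" if "h \<in> H_EP (grid n) p" for h
      using that card_label_changes_ep_hyp_le[OF \<open>0 < n\<close> assms(1)] by (auto simp: H_EP_def)
    show "2 \<le> alpha * real n"
      using assms(9) \<open>0 < n\<close> by (simp add: card_grid field_simps)
  qed (use assms(4,5) margin in auto)
qed

end
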